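(* Let $f,g\in\Lambda[t]$. Suppose there exists $n_0$ such that $f(c(2\lambda))=g(c(2\lambda))$ for all Young diagrams $\lambda$ with $|\lambda|\geq n_0$. Then $f=g$.
   Context: $\Lambda[t]$ is the algebra over ${\mathbb Q}[t]$ of symmetric functions in $x_1,x_2,\ldots$. The content of the box in row $x$ and column $y$ of a Young diagram is $y-x$, and $c(\lambda)$ is the multiset of contents of all boxes of $\lambda$. For a Young diagram $\lambda$ with $n$ boxes, $f(c(\lambda))$ is obtained by setting $t=n$, $x_i=0$ for $i>n$, and $\{x_1,\ldots,x_n\}=c(\lambda)$. $2\lambda$ is the Young diagram obtained by doubling every row length of $\lambda$, and $|\lambda|$ is the number of boxes of $\lambda$. *)

theory Defs
  imports "HOL-Computational_Algebra.Polynomial" "HOL-Library.Multiset"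
begin

text \<open>Variables are x_0, x_1, x_2, ... (0-indexed; the paper's x_i is our x_(i-1)).
  A monomial is an exponent vector alpha :: nat => nat with finite support.
  An element of Lambda[t] is a formal power series in the x's with coefficients in Q[t]
  (a function from exponent vectors to rat poly, zero on non-finitely-supported vectors),
  of bounded degree and invariant under all permutations of the variables.\<close>

type_synonym symfun = "(nat \<Rightarrow> nat) \<Rightarrow> rat poly"

definition mon_support :: "(nat \<Rightarrow> nat) \<Rightarrow> nat set" where
  "mon_support \<alpha> = {i. \<alpha> i \<noteq> 0}"

definition mon_degree :: "(nat \<Rightarrow> nat) \<Rightarrow> nat" where
  "mon_degree \<alpha> = (\<Sum>i\<in>mon_support \<alpha>. \<alpha> i)"

definition is_symfun :: "symfun \<Rightarrow> bool" where
  "is_symfun f \<longleftrightarrow>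
     (\<forall>\<alpha>. f \<alpha> \<noteq> 0 \<longrightarrow> finite (mon_support \<alpha>)) \<and>
     (\<exists>D. \<forall>\<alpha>. f \<alpha> \<noteq> 0 \<longrightarrow> mon_degree \<alpha> \<le> D) \<and>
     (\<forall>\<sigma> \<alpha>. bij \<sigma> \<longrightarrow> f (\<alpha> \<circ> \<sigma>) = f \<alpha>)"

definition eval_sym :: "symfun \<Rightarrow> nat \<Rightarrow> rat list \<Rightarrow> rat" where
  "eval_sym f n v =
     (\<Sum>\<alpha>\<in>{\<alpha>. mon_support \<alpha> \<subseteq> {..<n} \<and> f \<alpha> \<noteq> 0}.
        poly (f \<alpha>) (of_nat n) * (\<Prod>i<n. (v ! i) ^ \<alpha> i))"

definition young :: "nat list \<Rightarrow> bool" where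
  "young lam \<longleftrightarrow> sorted (rev lam) \<and> (\<forall>r\<in>set lam. 0 < r)"

definition size_yd :: "nat list \<Rightarrow> nat" where
  "size_yd lam = sum_list lam"

definition double_yd :: "nat list \<Rightarrow> nat list" where
  "double_yd lam = map (\<lambda>r. 2 * r) lam"

text \<open>Multiset of contents y - x of boxes (row x, column y), 1-indexed.\<close>
definition contents :: "nat list \<Rightarrow> int multiset" where
  "contents lam = mset (concat (map (\<lambda>x. map (\<lambda>y. int y - int x) [1..<lam ! (x - 1) + 1])
                                  [1..<length lam + 1]))"

text \<open>f(c(lambda)): t = |lambda|, {x_1..x_n} = c(lambda) (order irrelevant by symmetry).\<close>
definition eval_contents :: "symfun \<Rightarrow> nat list \<Rightarrow> rat" where
  "eval_contents f lam =
     eval_sym f (size_yd lam) (map of_int (sorted_list_of_multiset (contents lam)))"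

end

theory Submission
  imports Defs "HOL-Combinatorics.Transposition"
begin

text \<open>Let \<open>h = f - g\<close>. Expanding \<open>h\<close> one variable at a time, its value at the contents of
  a doubled diagram is, as a function of one row length \<open>a\<close> (with \<open>t\<close> growing like \<open>2a\<close>),
  a polynomial in \<open>a\<close>: the two boxes added with each increment of \<open>a\<close> only bring in
  coefficients of lower degree, and partial sums of polynomials are polynomials. So vanishing on
  all large diagrams propagates, row by row, to every list of row lengths, in particular to
  diagrams with rows of length \<open>0\<close> and \<open>2\<close> only.

  A row of length \<open>2\<close> in row \<open>r\<close> has contents \<open>x, x + 1\<close> with \<open>x = 1 - r\<close>. As \<open>r\<close> ranges over
  infinitely many rows, every coefficient of \<open>x\<^sup>m\<close> in \<open>h(x, x + 1, \<dots>)\<close> must vanish; doing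
  this for \<open>K\<close> rows shows that certain combinations \<open>\<Sum> w(\<alpha>) h\<^sub>\<alpha>(2K)\<close> of coefficients of
  \<open>h\<close> vanish. Now take a monomial \<open>\<alpha>\<close> of \<open>h\<close> of maximal degree and, among those, of minimal
  sum of squared exponents, with its variables moved to even positions, and choose the
  combination matching \<open>\<alpha>\<close> pair by pair. Maximality of the degree and minimality of the sum of
  squares leave only the monomials obtained from \<open>\<alpha>\<close> by swapping within pairs, each with weight
  \<open>1\<close>; so the combination is a positive multiple of \<open>h\<^sub>\<alpha>(2K)\<close>, which is nonzero for suitable
  large \<open>K\<close>.\<close>

section \<open>Monomials and coefficients of the first variable\<close>

definition perm_invariant :: "symfun \<Rightarrow> bool" where
  "perm_invariant h \<longleftrightarrow> (\<forall>\<sigma> \<alpha>. bij \<sigma> \<longrightarrow> h (\<alpha> \<circ> \<sigma>) = h \<alpha>)"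

definition degree_le :: "nat \<Rightarrow> symfun \<Rightarrow> bool" where
  "degree_le d h \<longleftrightarrow> (\<forall>\<alpha>. h \<alpha> \<noteq> 0 \<longrightarrow> finite (mon_support \<alpha>) \<and> mon_degree \<alpha> \<le> d)"

lemma is_symfun_iff: "is_symfun f \<longleftrightarrow> perm_invariant f \<and> (\<exists>d. degree_le d f)"
  unfolding is_symfun_def perm_invariant_def degree_le_def by blast

lemma degree_le_mono: "degree_le d h \<Longrightarrow> d \<le> d' \<Longrightarrow> degree_le d' h"
  unfolding degree_le_def using le_trans by blast

lemma perm_invariant_diff: "perm_invariant f \<Longrightarrow> perm_invariant g \<Longrightarrow> perm_invariant (\<lambda>\<alpha>. f \<alpha> - g \<alpha>)"
  unfolding perm_invariant_def by simp

lemma degree_le_diff: "degree_le d f \<Longrightarrow> degree_le d g \<Longrightarrow> degree_le d (\<lambda>\<alpha>. f \<alpha> - g \<alpha>)"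
  unfolding degree_le_def by (metis diff_zero diff_self)

definition mon_cons :: "nat \<Rightarrow> (nat \<Rightarrow> nat) \<Rightarrow> nat \<Rightarrow> nat" where
  "mon_cons j \<beta> = (\<lambda>i. case i of 0 \<Rightarrow> j | Suc i' \<Rightarrow> \<beta> i')"

lemma mon_cons_0 [simp]: "mon_cons j \<beta> 0 = j"
  and mon_cons_Suc [simp]: "mon_cons j \<beta> (Suc i) = \<beta> i"
  by (simp_all add: mon_cons_def)

lemma mon_cons_eq_iff: "mon_cons j \<beta> = mon_cons j' \<beta>' \<longleftrightarrow> j = j' \<and> \<beta> = \<beta>'"
  by (metis mon_cons_0 mon_cons_Suc ext)

lemma mon_support_mon_cons:
  "mon_support (mon_cons j \<beta>) = (if j = 0 then {} else {0}) \<union> Suc ` mon_support \<beta>"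
proof (rule set_eqI)
  fix i
  show "i \<in> mon_support (mon_cons j \<beta>) \<longleftrightarrow> i \<in> (if j = 0 then {} else {0}) \<union> Suc ` mon_support \<beta>"
    by (cases i) (auto simp: mon_support_def)
qed

lemma finite_mon_support_mon_cons [simp]:
  "finite (mon_support (mon_cons j \<beta>)) \<longleftrightarrow> finite (mon_support \<beta>)"
  by (auto simp: mon_support_mon_cons finite_image_iff)

lemma mon_degree_eq_sum: "finite A \<Longrightarrow> mon_support \<alpha> \<subseteq> A \<Longrightarrow> mon_degree \<alpha> = (\<Sum>i\<in>A. \<alpha> i)"
  unfolding mon_degree_def by (rule sum.mono_neutral_left) (auto simp: mon_support_def)

lemma mon_degree_mon_cons:
  assumes "finite (mon_support \<beta>)"
  shows "mon_degree (mon_cons j \<beta>) = j + mon_degree \<beta>"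
proof -
  obtain m where m: "mon_support \<beta> \<subseteq> {..<m}"
    using assms finite_nat_iff_bounded by blast
  then have "mon_support (mon_cons j \<beta>) \<subseteq> {..<Suc m}"
    by (auto simp: mon_support_mon_cons)
  then have "mon_degree (mon_cons j \<beta>) = (\<Sum>i<Suc m. mon_cons j \<beta> i)"
    by (rule mon_degree_eq_sum[rotated]) simp
  also have "\<dots> = j + (\<Sum>i<m. \<beta> i)"
    by (subst sum.lessThan_Suc_shift) simp
  also have "\<dots> = j + mon_degree \<beta>"
    using m by (simp add: mon_degree_eq_sum[of "{..<m}"])
  finally show ?thesis .
qed

lemma exponent_le_mon_degree: "finite (mon_support \<alpha>) \<Longrightarrow> \<alpha> i \<le> mon_degree \<alpha>"
  unfolding mon_degree_def
  by (cases "\<alpha> i = 0") (auto simp: mon_support_def intro!: member_le_sum)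

lemma degree_le_exponent_le: "degree_le d h \<Longrightarrow> h \<alpha> \<noteq> 0 \<Longrightarrow> \<alpha> i \<le> d"
  unfolding degree_le_def using exponent_le_mon_degree le_trans by blast

text \<open>The coefficient of \<open>x\<^sub>0\<^sup>j\<close>, with the remaining variables
  \<open>x\<^sub>1, x\<^sub>2, \<dots>\<close> renamed to \<open>x\<^sub>0, x\<^sub>1, \<dots>\<close>.\<close>
definition x0_coeff :: "nat \<Rightarrow> symfun \<Rightarrow> symfun" where
  "x0_coeff j h = (\<lambda>\<beta>. h (mon_cons j \<beta>))"

lemma perm_invariant_x0_coeff:
  assumes "perm_invariant h"
  shows "perm_invariant (x0_coeff j h)"
  unfolding perm_invariant_def
proof (intro allI impI)
  fix \<sigma> :: "nat \<Rightarrow> nat" and \<beta>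
  assume "bij \<sigma>"
  define \<tau> where "\<tau> = (\<lambda>i. case i of 0 \<Rightarrow> 0 | Suc i' \<Rightarrow> Suc (\<sigma> i'))"
  define \<tau>' where "\<tau>' = (\<lambda>i. case i of 0 \<Rightarrow> 0 | Suc i' \<Rightarrow> Suc (inv \<sigma> i'))"
  have "bij \<tau>"
  proof (rule o_bij)
    show "\<tau>' \<circ> \<tau> = id" "\<tau> \<circ> \<tau>' = id"
      using \<open>bij \<sigma>\<close> by (auto simp: \<tau>_def \<tau>'_def fun_eq_iff bij_is_inj bij_is_surj
          surj_f_inv_f split: nat.splits)
  qed
  moreover have "mon_cons j (\<beta> \<circ> \<sigma>) = mon_cons j \<beta> \<circ> \<tau>"
    by (auto simp: fun_eq_iff \<tau>_def mon_cons_def split: nat.splits)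
  ultimately show "x0_coeff j h (\<beta> \<circ> \<sigma>) = x0_coeff j h \<beta>"
    using assms by (simp add: perm_invariant_def x0_coeff_def)
qed

lemma degree_le_x0_coeff: "degree_le d h \<Longrightarrow> degree_le (d - j) (x0_coeff j h)"
  unfolding degree_le_def x0_coeff_def
  by (metis add_diff_cancel_left' diff_le_mono finite_mon_support_mon_cons mon_degree_mon_cons)

lemma x0_coeff_eq_zero: "degree_le d h \<Longrightarrow> d < j \<Longrightarrow> x0_coeff j h = (\<lambda>_. 0)"
  unfolding degree_le_def x0_coeff_def fun_eq_iff
  by (metis finite_mon_support_mon_cons le_add1 mon_degree_mon_cons order.trans not_le)

lemma x0_coeff_x0_coeff_eq_zero:
  assumes "degree_le d h" "d < j + j'"
  shows "x0_coeff j' (x0_coeff j h) = (\<lambda>_. 0)"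
proof (cases "d < j")
  case True
  then show ?thesis
    using x0_coeff_eq_zero[OF assms(1)] by (simp add: x0_coeff_def)
next
  case False
  then show ?thesis
    using x0_coeff_eq_zero[OF degree_le_x0_coeff[OF assms(1)]] assms(2) by simp
qed

lemma x0_coeff_0:
  assumes "perm_invariant h" "degree_le d h"
  shows "x0_coeff 0 h = h"
proof
  fix \<beta>
  show "x0_coeff 0 h \<beta> = h \<beta>"
  proof (cases "finite (mon_support \<beta>)")
    case False
    then show ?thesis
      using assms(2) by (metis degree_le_def finite_mon_support_mon_cons x0_coeff_def)
  next
    case True
    then obtain m where m: "mon_support \<beta> \<subseteq> {..<m}"
      using finite_nat_iff_bounded by blast
    \<comment> \<open>the cyclic shift \<open>0 \<mapsto> m\<close>, \<open>i \<mapsto> i - 1\<close> on \<open>{1..m}\<close> moves the zero exponent out of the support\<close>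
    define \<sigma> where "\<sigma> = (\<lambda>i::nat. if i = 0 then m else if i \<le> m then i - 1 else i)"
    define \<rho> where "\<rho> = (\<lambda>i::nat. if i = m then 0 else if i < m then i + 1 else i)"
    have "bij \<sigma>"
      by (rule o_bij[where g = \<rho>]) (auto simp: fun_eq_iff \<sigma>_def \<rho>_def)
    moreover have "\<beta> \<circ> \<sigma> = mon_cons 0 \<beta>"
    proof
      fix i
      have "\<beta> i = 0" if "m \<le> i" for i
        using m that by (auto simp: mon_support_def subset_iff)
      then show "(\<beta> \<circ> \<sigma>) i = mon_cons 0 \<beta> i"
        by (cases i) (auto simp: \<sigma>_def)
    qed
    ultimately show ?thesis
      using assms(1) unfolding perm_invariant_def x0_coeff_def by metis
  qed
qed

lemma x0_coeff_commute:
  assumes "perm_invariant h"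
  shows "x0_coeff j (x0_coeff j' h) = x0_coeff j' (x0_coeff j h)"
proof
  fix \<beta>
  have "mon_cons j' (mon_cons j \<beta>) \<circ> Transposition.transpose 0 1 = mon_cons j (mon_cons j' \<beta>)"
  proof
    fix i
    show "(mon_cons j' (mon_cons j \<beta>) \<circ> Transposition.transpose 0 1) i = mon_cons j (mon_cons j' \<beta>) i"
      by (cases i; cases "i - 1") (auto simp: Transposition.transpose_def)
  qed
  then show "x0_coeff j (x0_coeff j' h) \<beta> = x0_coeff j' (x0_coeff j h) \<beta>"
    using assms unfolding perm_invariant_def x0_coeff_def by (metis bij_transpose)
qed

section \<open>Evaluation at finitely many variables\<close>

text \<open>Only exponents up to \<open>N\<close> are seen, so this agrees with \<^const>\<open>eval_sym\<close>
  only for functions whose exponents are bounded by \<open>N\<close>.\<close>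
fun eval_list :: "nat \<Rightarrow> symfun \<Rightarrow> rat \<Rightarrow> rat list \<Rightarrow> rat" where
  "eval_list N h t [] = poly (h (\<lambda>_. 0)) t"
| "eval_list N h t (e # w) = (\<Sum>j\<le>N. e ^ j * eval_list N (x0_coeff j h) t w)"

lemma eval_list_lincomb:
  "finite I \<Longrightarrow>
   eval_list N (\<lambda>\<alpha>. \<Sum>i\<in>I. smult (c i) (H i \<alpha>)) t w = (\<Sum>i\<in>I. c i * eval_list N (H i) t w)"
proof (induction w arbitrary: H)
  case Nil
  then show ?case by (simp add: poly_sum)
next
  case (Cons e w)
  have "x0_coeff j (\<lambda>\<alpha>. \<Sum>i\<in>I. smult (c i) (H i \<alpha>)) = (\<lambda>\<alpha>. \<Sum>i\<in>I. smult (c i) (x0_coeff j (H i) \<alpha>))"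
    for j by (simp add: x0_coeff_def)
  then show ?case
    using Cons by (simp add: sum_distrib_left sum.swap[of _ I] mult.left_commute)
qed

lemma eval_list_zero [simp]: "eval_list N (\<lambda>_. 0) t w = 0"
  using eval_list_lincomb[of "{}"] by simp

lemma eval_list_diff: "eval_list N (\<lambda>\<alpha>. h1 \<alpha> - h2 \<alpha>) t w = eval_list N h1 t w - eval_list N h2 t w"
proof (induction w arbitrary: h1 h2)
  case (Cons e w)
  have "x0_coeff j (\<lambda>\<alpha>. h1 \<alpha> - h2 \<alpha>) = (\<lambda>\<alpha>. x0_coeff j h1 \<alpha> - x0_coeff j h2 \<alpha>)" for j
    by (simp add: x0_coeff_def)
  then show ?case
    using Cons by (simp add: right_diff_distrib sum_subtractf)
qed simp

lemma eval_list_swap: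
  assumes "perm_invariant h"
  shows "eval_list N h t (a # b # w) = eval_list N h t (b # a # w)"
proof -
  have "eval_list N h t (a # b # w) =
      (\<Sum>j\<le>N. \<Sum>j'\<le>N. a ^ j * b ^ j' * eval_list N (x0_coeff j' (x0_coeff j h)) t w)"
    by (simp add: sum_distrib_left mult.assoc)
  also have "\<dots> = (\<Sum>j'\<le>N. \<Sum>j\<le>N. a ^ j * b ^ j' * eval_list N (x0_coeff j' (x0_coeff j h)) t w)"
    by (rule sum.swap)
  also have "\<dots> = eval_list N h t (b # a # w)"
    using x0_coeff_commute[OF assms] by (simp add: sum_distrib_left mult.assoc mult.left_commute)
  finally show ?thesis .
qed

lemma eval_list_move_to_front:
  assumes "perm_invariant h"
  shows "eval_list N h t (xs @ b # ys) = eval_list N h t (b # xs @ ys)"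
  using assms
proof (induction xs arbitrary: h)
  case (Cons x xs)
  have "eval_list N h t ((x # xs) @ b # ys) = eval_list N h t (x # b # xs @ ys)"
    using Cons perm_invariant_x0_coeff by simp
  also have "\<dots> = eval_list N h t (b # x # xs @ ys)"
    by (rule eval_list_swap[OF Cons.prems])
  finally show ?case by simp
qed simp

lemma eval_list_perm:
  assumes "perm_invariant h" "mset w = mset w'"
  shows "eval_list N h t w = eval_list N h t w'"
  using assms
proof (induction w arbitrary: h w')
  case (Cons x xs)
  then have "x \<in> set w'"
    by (metis list.set_intros(1) mset_eq_setD)
  then obtain us vs where w': "w' = us @ x # vs"
    by (meson split_list)
  have "mset xs = mset (us @ vs)"
    using Cons.prems(2) w' by simp
  then have "eval_list N (x0_coeff j h) t xs = eval_list N (x0_coeff j h) t (us @ vs)" for j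
    using Cons.IH[OF perm_invariant_x0_coeff[OF Cons.prems(1)]] by blast
  then have "eval_list N h t (x # xs) = eval_list N h t (x # us @ vs)"
    by simp
  also have "\<dots> = eval_list N h t w'"
    using w' eval_list_move_to_front[OF Cons.prems(1)] by simp
  finally show ?case .
qed simp

lemma eval_list_poly_in_t: "\<exists>q. \<forall>t. eval_list N h t w = poly q t"
proof (induction w arbitrary: h)
  case (Cons e w)
  then have "\<forall>j. \<exists>q. \<forall>t. eval_list N (x0_coeff j h) t w = poly q t"
    by blast
  then obtain Q where Q: "\<And>j t. eval_list N (x0_coeff j h) t w = poly (Q j) t"
    by metis
  show ?case
    by (rule exI[of _ "\<Sum>j\<le>N. smult (e ^ j) (Q j)"]) (simp add: Q poly_sum)
qed auto

definition exps_box :: "nat \<Rightarrow> nat \<Rightarrow> (nat \<Rightarrow> nat) set" where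
  "exps_box N n = {\<alpha>. (\<forall>i\<ge>n. \<alpha> i = 0) \<and> (\<forall>i. \<alpha> i \<le> N)}"

lemma finite_exps_box: "finite (exps_box N n)"
proof (rule finite_subset)
  show "exps_box N n \<subseteq> {f. \<forall>x. (x \<in> {..<n} \<longrightarrow> f x \<in> {..N}) \<and> (x \<notin> {..<n} \<longrightarrow> f x = 0)}"
    by (auto simp: exps_box_def)
qed (rule finite_set_of_finite_funs; simp)

lemma exps_box_0: "exps_box N 0 = {\<lambda>_. 0}"
  by (auto simp: exps_box_def)

lemma exps_box_Suc: "exps_box N (Suc n) = (\<lambda>(j, \<beta>). mon_cons j \<beta>) ` ({..N} \<times> exps_box N n)"
proof (rule set_eqI, rule iffI)
  fix \<alpha>
  assume "\<alpha> \<in> exps_box N (Suc n)"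
  moreover have "\<alpha> = mon_cons (\<alpha> 0) (\<lambda>i. \<alpha> (Suc i))"
    by (auto simp: fun_eq_iff mon_cons_def split: nat.splits)
  ultimately show "\<alpha> \<in> (\<lambda>(j, \<beta>). mon_cons j \<beta>) ` ({..N} \<times> exps_box N n)"
    by (intro image_eqI[of _ _ "(\<alpha> 0, \<lambda>i. \<alpha> (Suc i))"]) (auto simp: exps_box_def)
next
  fix \<alpha>
  assume "\<alpha> \<in> (\<lambda>(j, \<beta>). mon_cons j \<beta>) ` ({..N} \<times> exps_box N n)"
  then show "\<alpha> \<in> exps_box N (Suc n)"
    by (auto simp: exps_box_def mon_cons_def split: nat.splits)
qed

lemma sum_exps_box_Suc:
  "(\<Sum>\<alpha>\<in>exps_box N (Suc n). F \<alpha>) = (\<Sum>j\<le>N. \<Sum>\<beta>\<in>exps_box N n. F (mon_cons j \<beta>))"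
proof -
  have "inj_on (\<lambda>(j, \<beta>). mon_cons j \<beta>) A" for A
    by (auto simp: inj_on_def mon_cons_eq_iff)
  then show ?thesis
    by (simp add: exps_box_Suc sum.reindex sum.cartesian_product split_def)
qed

lemma eval_list_eq_sum:
  "eval_list N h t w =
     (\<Sum>\<alpha>\<in>exps_box N (length w). poly (h \<alpha>) t * (\<Prod>i<length w. (w ! i) ^ \<alpha> i))"
proof (induction w arbitrary: h)
  case Nil
  then show ?case by (simp add: exps_box_0)
next
  case (Cons e w)
  then show ?case
    by (simp add: sum_exps_box_Suc prod.lessThan_Suc_shift sum_distrib_left x0_coeff_def
        mult.left_commute del: prod.lessThan_Suc)
qed

lemma eval_sym_eq_eval_list:
  assumes "degree_le N h"
  shows "eval_sym h (length w) w = eval_list N h (of_nat (length w)) w"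
proof -
  have "{\<alpha>. mon_support \<alpha> \<subseteq> {..<length w} \<and> h \<alpha> \<noteq> 0} \<subseteq> exps_box N (length w)"
    using degree_le_exponent_le[OF assms]
    by (auto simp: exps_box_def mon_support_def subset_iff not_less)
  then show ?thesis
    unfolding eval_sym_def eval_list_eq_sum
    by (intro sum.mono_neutral_left finite_exps_box) (auto simp: exps_box_def mon_support_def)
qed

section \<open>Contents of doubled diagrams\<close>

text \<open>The contents of the rows \<open>rs\<close>, placed in rows \<open>k + 1, k + 2, \<dots>\<close> of a diagram.\<close>
fun row_contents :: "nat \<Rightarrow> nat list \<Rightarrow> int list" where
  "row_contents k [] = []"
| "row_contents k (r # rs) = map (\<lambda>y. int y - int (Suc k)) [1..<r + 1] @ row_contents (Suc k) rs"

lemma row_contents_eq_concat: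
  "concat (map (\<lambda>x. map (\<lambda>y. int y - int x) [1..<lam ! (x - Suc k) + 1]) [Suc k..<length lam + Suc k])
   = row_contents k lam"
proof (induction lam arbitrary: k)
  case (Cons r rs)
  have first_row: "[Suc k..<length (r # rs) + Suc k] = Suc k # [Suc (Suc k)..<length rs + Suc (Suc k)]"
    by (simp add: upt_rec[of "Suc k"] del: upt_Suc)
  have later_rows: "map (\<lambda>x. map (\<lambda>y. int y - int x) [1..<(r # rs) ! (x - Suc k) + 1])
                   [Suc (Suc k)..<length rs + Suc (Suc k)]
      = map (\<lambda>x. map (\<lambda>y. int y - int x) [1..<rs ! (x - Suc (Suc k)) + 1])
                   [Suc (Suc k)..<length rs + Suc (Suc k)]"
  proof (rule map_cong[OF refl])
    fix x
    assume "x \<in> set [Suc (Suc k)..<length rs + Suc (Suc k)]"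
    then have "x - Suc k = Suc (x - Suc (Suc k))"
      by auto
    then show "map (\<lambda>y. int y - int x) [1..<(r # rs) ! (x - Suc k) + 1] =
               map (\<lambda>y. int y - int x) [1..<rs ! (x - Suc (Suc k)) + 1]"
      by simp
  qed
  show ?case
    unfolding first_row list.map concat.simps later_rows Cons.IH[of "Suc k"] by simp
qed simp

lemma contents_eq_row_contents: "contents lam = mset (row_contents 0 lam)"
  unfolding contents_def using row_contents_eq_concat[of lam 0] by simp

lemma row_contents_append:
  "row_contents k (xs @ ys) = row_contents k xs @ row_contents (k + length xs) ys"
  by (induction xs arbitrary: k) auto

lemma length_row_contents: "length (row_contents k xs) = sum_list xs"
  by (induction xs arbitrary: k) auto

definition doubled_contents :: "nat list \<Rightarrow> rat list" where
  "doubled_contents rows = map of_int (row_contents 0 (map (\<lambda>r. 2 * r) rows))"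

definition eval_doubled :: "nat \<Rightarrow> symfun \<Rightarrow> nat list \<Rightarrow> rat" where
  "eval_doubled N h rows = eval_list N h (of_nat (2 * sum_list rows)) (doubled_contents rows)"

lemma sum_list_double: "sum_list (map (\<lambda>r. 2 * r) xs) = 2 * sum_list (xs :: nat list)"
  by (induction xs) auto

lemma eval_contents_double_yd:
  assumes "perm_invariant h" "degree_le N h"
  shows "eval_contents h (double_yd lam) = eval_doubled N h lam"
proof -
  let ?w = "map (of_int :: int \<Rightarrow> rat) (sorted_list_of_multiset (contents (double_yd lam)))"
  have perm: "mset ?w = mset (doubled_contents lam)"
    by (simp add: contents_eq_row_contents double_yd_def doubled_contents_def)
  have size: "size_yd (double_yd lam) = length ?w" "length ?w = 2 * sum_list lam"
    using mset_eq_length[OF perm]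
    by (simp_all add: doubled_contents_def length_row_contents size_yd_def double_yd_def
        sum_list_double)
  have "eval_contents h (double_yd lam) = eval_list N h (of_nat (length ?w)) ?w"
    unfolding eval_contents_def size(1) by (rule eval_sym_eq_eval_list[OF assms(2)])
  also have "\<dots> = eval_doubled N h lam"
    unfolding eval_doubled_def size(2) by (rule eval_list_perm[OF assms(1) perm])
  finally show ?thesis .
qed

lemma eval_doubled_diff:
  "eval_doubled N (\<lambda>\<alpha>. h1 \<alpha> - h2 \<alpha>) rows = eval_doubled N h1 rows - eval_doubled N h2 rows"
  by (simp add: eval_doubled_def eval_list_diff)

section \<open>Polynomial dependence on a single row length\<close>

lemma sum_powers_poly:
  "\<exists>q. \<forall>n. (\<Sum>b<n. of_nat b ^ k) = poly q (of_nat n :: 'a :: field_char_0)"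
proof (induction k rule: less_induct)
  case (less k)
  then have "\<forall>i. \<exists>q. i < k \<longrightarrow> (\<forall>n. (\<Sum>b<n. of_nat b ^ i) = poly q (of_nat n :: 'a))"
    by blast
  then obtain Q where Q: "\<And>i n. i < k \<Longrightarrow> (\<Sum>b<n. of_nat b ^ i) = poly (Q i) (of_nat n :: 'a)"
    by metis
  \<comment> \<open>telescoping \<open>(b + 1)\<^sup>k\<^sup>+\<^sup>1 - b\<^sup>k\<^sup>+\<^sup>1\<close> expresses the sum of \<open>k\<close>-th powers through lower powers\<close>
  have telescope: "(\<Sum>i\<le>k. of_nat (Suc k choose i) * (\<Sum>b<n. of_nat b ^ i)) = (of_nat n :: 'a) ^ Suc k"
    for n
  proof -
    have "(\<Sum>i\<le>k. of_nat (Suc k choose i) * (\<Sum>b<n. of_nat b ^ i))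
        = (\<Sum>b<n. \<Sum>i\<le>k. of_nat (Suc k choose i) * (of_nat b :: 'a) ^ i)"
      by (simp add: sum_distrib_left sum.swap[of _ "{..k}"])
    also have "\<dots> = (\<Sum>b<n. (of_nat b + 1 :: 'a) ^ Suc k - of_nat b ^ Suc k)"
      by (simp only: binomial_ring[of "of_nat _" 1] sum.atMost_Suc) simp
    also have "\<dots> = (\<Sum>b<n. (of_nat (Suc b) :: 'a) ^ Suc k - of_nat b ^ Suc k)"
      by (simp add: add.commute)
    also have "\<dots> = of_nat n ^ Suc k"
      by (subst sum_lessThan_telescope) simp
    finally show ?thesis .
  qed
  define q where "q = smult (1 / of_nat (Suc k))
      ([:0, 1:] ^ Suc k - (\<Sum>i<k. smult (of_nat (Suc k choose i)) (Q i)))"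
  have "(\<Sum>b<n. of_nat b ^ k) = poly q (of_nat n)" for n
  proof -
    have "(of_nat n :: 'a) ^ Suc k = (\<Sum>i<k. of_nat (Suc k choose i) * poly (Q i) (of_nat n))
          + of_nat (Suc k) * (\<Sum>b<n. of_nat b ^ k)"
      using telescope[of n] by (simp add: lessThan_Suc_atMost[symmetric] Q del: of_nat_Suc)
    then show ?thesis
      by (simp add: q_def poly_sum field_simps del: of_nat_Suc)
  qed
  then show ?case by blast
qed

lemma sum_poly_poly: "\<exists>q. \<forall>n. (\<Sum>b<n. poly p (of_nat b)) = poly q (of_nat n :: 'a :: field_char_0)"
proof -
  have "\<forall>i. \<exists>q. \<forall>n. (\<Sum>b<n. of_nat b ^ i) = poly q (of_nat n :: 'a)"
    using sum_powers_poly by blast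
  then obtain Q where Q: "\<And>i n. (\<Sum>b<n. of_nat b ^ i) = poly (Q i) (of_nat n :: 'a)"
    by metis
  have "(\<Sum>b<n. poly p (of_nat b)) = poly (\<Sum>i\<le>degree p. smult (coeff p i) (Q i)) (of_nat n)" for n
  proof -
    have "(\<Sum>b<n. poly p (of_nat b)) = (\<Sum>b<n. \<Sum>i\<le>degree p. coeff p i * of_nat b ^ i)"
      by (simp add: poly_altdef)
    also have "\<dots> = (\<Sum>i\<le>degree p. coeff p i * (\<Sum>b<n. of_nat b ^ i))"
      by (simp add: sum_distrib_left sum.swap[of _ "{..<n}"])
    finally show ?thesis
      by (simp add: Q poly_sum)
  qed
  then show ?thesis by blast
qed

definition bipoly :: "(rat \<Rightarrow> nat \<Rightarrow> rat) \<Rightarrow> bool" where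
  "bipoly G \<longleftrightarrow> (\<exists>K p. \<forall>t a. G t a = (\<Sum>k<K. t ^ k * poly (p k) (of_nat a)))"

lemma bipoly_zero: "bipoly (\<lambda>t a. 0)"
  unfolding bipoly_def by (rule exI[of _ 0]) simp

lemma bipoly_add:
  assumes "bipoly G1" "bipoly G2"
  shows "bipoly (\<lambda>t a. G1 t a + G2 t a)"
proof -
  obtain K1 p1 where 1: "\<And>t a. G1 t a = (\<Sum>k<K1. t ^ k * poly (p1 k) (of_nat a))"
    using assms(1) bipoly_def by metis
  obtain K2 p2 where 2: "\<And>t a. G2 t a = (\<Sum>k<K2. t ^ k * poly (p2 k) (of_nat a))"
    using assms(2) bipoly_def by metis
  have pad: "(\<Sum>k<K1 + K2. if k < K then f k else 0) = (\<Sum>k<K. f k)"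
    if "K \<le> K1 + K2" for K and f :: "nat \<Rightarrow> rat"
  proof -
    have "{..<K1 + K2} \<inter> {k. k < K} = {..<K}"
      using that by auto
    then show ?thesis by (simp add: sum.If_cases)
  qed
  define p where "p k = (if k < K1 then p1 k else 0) + (if k < K2 then p2 k else 0)" for k
  have "G1 t a + G2 t a = (\<Sum>k<K1 + K2. t ^ k * poly (p k) (of_nat a))" for t a
  proof -
    have "G1 t a + G2 t a =
        (\<Sum>k<K1 + K2. if k < K1 then t ^ k * poly (p1 k) (of_nat a) else 0) +
        (\<Sum>k<K1 + K2. if k < K2 then t ^ k * poly (p2 k) (of_nat a) else 0)"
      by (simp add: 1 2 pad)
    also have "\<dots> = (\<Sum>k<K1 + K2. t ^ k * poly (p k) (of_nat a))"
      by (subst sum.distrib[symmetric]) (rule sum.cong; simp add: p_def algebra_simps)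
    finally show ?thesis .
  qed
  then show ?thesis
    unfolding bipoly_def by blast
qed

lemma bipoly_sum: "finite I \<Longrightarrow> (\<And>i. i \<in> I \<Longrightarrow> bipoly (G i)) \<Longrightarrow> bipoly (\<lambda>t a. \<Sum>i\<in>I. G i t a)"
  by (induction I rule: finite_induct) (simp_all add: bipoly_zero bipoly_add)

lemma bipoly_mult_poly: "bipoly G \<Longrightarrow> bipoly (\<lambda>t a. poly r (of_nat a) * G t a)"
  unfolding bipoly_def
proof (elim exE)
  fix K p
  assume "\<forall>t a. G t a = (\<Sum>k<K. t ^ k * poly (p k) (of_nat a))"
  then have "poly r (of_nat a) * G t a = (\<Sum>k<K. t ^ k * poly (r * p k) (of_nat a))" for t a
    by (simp add: sum_distrib_left mult_ac)
  then show "\<exists>K p. \<forall>t a. poly r (of_nat a) * G t a = (\<Sum>k<K. t ^ k * poly (p k) (of_nat a))"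
    by (intro exI[of _ K] exI[of _ "\<lambda>k. r * p k"]) blast
qed

lemma bipoly_telescope:
  assumes step: "\<And>t a. G t (Suc a) = G t a + H t a" and "bipoly H" and init: "\<And>t. G t 0 = poly q t"
  shows "bipoly G"
proof -
  obtain K p where H: "\<And>t a. H t a = (\<Sum>k<K. t ^ k * poly (p k) (of_nat a))"
    using \<open>bipoly H\<close> bipoly_def by metis
  have "\<forall>k. \<exists>s. \<forall>n. (\<Sum>b<n. poly (p k) (of_nat b)) = poly s (of_nat n :: rat)"
    using sum_poly_poly by blast
  then obtain S where S: "\<And>k n. (\<Sum>b<n. poly (p k) (of_nat b)) = poly (S k) (of_nat n :: rat)"
    by metis
  have "G t a = poly q t + (\<Sum>b<a. H t b)" for t a
    by (induction a) (simp_all add: step init)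
  also have "(\<Sum>b<a. H t b) = (\<Sum>k<K. t ^ k * poly (S k) (of_nat a))" for t a
  proof -
    have "(\<Sum>b<a. H t b) = (\<Sum>k<K. t ^ k * (\<Sum>b<a. poly (p k) (of_nat b)))"
      by (simp add: H sum_distrib_left) (rule sum.swap)
    then show ?thesis
      by (simp add: S)
  qed
  finally have G: "G t a = poly q t + (\<Sum>k<K. t ^ k * poly (S k) (of_nat a))" for t a .
  have "bipoly (\<lambda>t a. poly q t)"
    unfolding bipoly_def
    by (rule exI[of _ "Suc (degree q)"], rule exI[of _ "\<lambda>k. [:coeff q k:]"])
       (simp add: poly_altdef lessThan_Suc_atMost mult.commute)
  moreover have "bipoly (\<lambda>t a. \<Sum>k<K. t ^ k * poly (S k) (of_nat a))"
    unfolding bipoly_def by blast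
  ultimately have "bipoly (\<lambda>t a. poly q t + (\<Sum>k<K. t ^ k * poly (S k) (of_nat a)))"
    by (rule bipoly_add)
  moreover have "G = (\<lambda>t a. poly q t + (\<Sum>k<K. t ^ k * poly (S k) (of_nat a)))"
    by (intro ext) (rule G)
  ultimately show ?thesis
    by simp
qed

lemma bipoly_diagonal: "bipoly G \<Longrightarrow> \<exists>q. \<forall>a. G (c + 2 * of_nat a) a = poly q (of_nat a)"
  unfolding bipoly_def
proof (elim exE)
  fix K p
  assume "\<forall>t a. G t a = (\<Sum>k<K. t ^ k * poly (p k) (of_nat a))"
  then have "G (c + 2 * of_nat a) a = poly (\<Sum>k<K. [:c, 2:] ^ k * p k) (of_nat a)" for a
    by (simp add: poly_sum mult.commute)
  then show ?thesis by blast
qed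

definition row_block :: "nat \<Rightarrow> nat \<Rightarrow> rat list" where
  "row_block k a = map of_int (row_contents k [2 * a])"

lemma row_block_0: "row_block k 0 = []"
  by (simp add: row_block_def)

lemma row_block_Suc:
  "row_block k (Suc a) = row_block k a @ [of_nat (2 * a) - of_nat k, of_nat (2 * a) - of_nat k + 1]"
proof -
  have "[1..<2 * Suc a + 1] = [1..<2 * a + 1] @ [2 * a + 1, 2 * a + 2]"
    by (simp add: numeral_eq_Suc)
  then show ?thesis
    by (simp add: row_block_def)
qed

lemma eval_list_Cons_Cons:
  "eval_list N h t (x # y # w) =
     (\<Sum>(j, j')\<in>{..N} \<times> {..N}. x ^ j * y ^ j' * eval_list N (x0_coeff j' (x0_coeff j h)) t w)"
  by (simp add: sum.cartesian_product sum_distrib_left mult.assoc)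

lemma bipoly_eval_row_block:
  "perm_invariant h \<Longrightarrow> degree_le d h \<Longrightarrow> bipoly (\<lambda>t a. eval_list N h t (row_block k a @ v))"
proof (induction d arbitrary: h rule: less_induct)
  case (less d)
  let ?hh = "\<lambda>j j'. x0_coeff j' (x0_coeff j h)"
  define P where "P = {..N} \<times> {..N} - {(0, 0)}"
  define x where "x a = (of_nat (2 * a) :: rat) - of_nat k" for a
  have lower: "bipoly (\<lambda>t a. eval_list N (?hh j j') t (row_block k a @ v))" if "(j, j') \<in> P" for j j'
  proof (cases "d < j + j'")
    case True
    then show ?thesis
      using x0_coeff_x0_coeff_eq_zero[OF less.prems(2)] by (simp add: bipoly_zero)
  next
    case False
    then have "d - j - j' < d"
      using that by (auto simp: P_def)
    moreover have "perm_invariant (?hh j j')" "degree_le (d - j - j') (?hh j j')"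
      using less.prems by (metis perm_invariant_x0_coeff, metis degree_le_x0_coeff)
    ultimately show ?thesis
      using less.IH by blast
  qed
  define H where "H t a =
      (\<Sum>(j, j')\<in>P. x a ^ j * (x a + 1) ^ j' * eval_list N (?hh j j') t (row_block k a @ v))" for t a
  have bipoly_H: "bipoly H"
    unfolding H_def split_def
  proof (rule bipoly_sum)
    fix p
    assume "p \<in> P"
    have pow_eq: "x a ^ fst p * (x a + 1) ^ snd p =
        poly ([:- of_nat k, 2:] ^ fst p * [:1 - of_nat k, 2:] ^ snd p) (of_nat a)" for a
      by (simp add: x_def algebra_simps)
    show "bipoly (\<lambda>t a. x a ^ fst p * (x a + 1) ^ snd p *
        eval_list N (?hh (fst p) (snd p)) t (row_block k a @ v))"
      unfolding pow_eq by (rule bipoly_mult_poly[OF lower]) (simp add: \<open>p \<in> P\<close>)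
  qed (simp add: P_def)
  \<comment> \<open>the two boxes added to the row contribute \<open>x\<^sup>j (x + 1)\<^sup>j\<^sup>'\<close>, and every term with
    \<open>(j, j') \<noteq> (0, 0)\<close> involves a coefficient of lower degree\<close>
  have step: "eval_list N h t (row_block k (Suc a) @ v) = eval_list N h t (row_block k a @ v) + H t a"
    for t a
  proof -
    have "eval_list N h t (row_block k (Suc a) @ v) =
        eval_list N h t (x a # (x a + 1) # row_block k a @ v)"
      by (rule eval_list_perm[OF less.prems(1)]) (simp add: row_block_Suc x_def)
    also have "\<dots> = eval_list N h t (row_block k a @ v) + H t a"
      unfolding eval_list_Cons_Cons H_def P_def
      using x0_coeff_0[OF less.prems] by (subst sum.remove[of _ "(0, 0)"]) auto
    finally show ?thesis .
  qed
  obtain q where q: "\<And>t. eval_list N h t v = poly q t"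
    using eval_list_poly_in_t by metis
  show ?case
    by (rule bipoly_telescope[OF step bipoly_H, of q]) (simp add: row_block_0 q)
qed

lemma doubled_contents_Cons_append:
  "doubled_contents (pre @ a # rest) =
     doubled_contents pre @ row_block (length pre) a @
       map of_int (row_contents (Suc (length pre)) (map (\<lambda>r. 2 * r) rest))"
  by (simp add: doubled_contents_def row_block_def row_contents_append)

lemma eval_doubled_poly_in_row:
  assumes "perm_invariant h" "degree_le d h"
  shows "\<exists>q. \<forall>a. eval_doubled N h (pre @ a # rest) = poly q (of_nat a)"
proof -
  define A where "A = doubled_contents pre"
  define B where
    "B = map (of_int :: int \<Rightarrow> rat) (row_contents (Suc (length pre)) (map (\<lambda>r. 2 * r) rest))"
  define c where "c = (of_nat (2 * (sum_list pre + sum_list rest)) :: rat)"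
  obtain q where
    q: "\<And>a. eval_list N h (c + 2 * of_nat a) (row_block (length pre) a @ A @ B) = poly q (of_nat a)"
    using bipoly_diagonal[OF bipoly_eval_row_block[OF assms]] by metis
  have t_eq: "(of_nat (2 * sum_list (pre @ a # rest)) :: rat) = c + 2 * of_nat a" for a
    by (simp add: c_def)
  have "eval_doubled N h (pre @ a # rest) =
      eval_list N h (c + 2 * of_nat a) (A @ row_block (length pre) a @ B)" for a
    unfolding eval_doubled_def t_eq doubled_contents_Cons_append A_def B_def ..
  also have "\<dots> a = eval_list N h (c + 2 * of_nat a) (row_block (length pre) a @ A @ B)" for a
    by (rule eval_list_perm[OF assms(1)]) simp
  finally show ?thesis
    using q by metis
qed

lemma young_Cons: "young rest \<Longrightarrow> sum_list rest < a \<Longrightarrow> young (a # rest)"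
  unfolding young_def by (auto simp: sorted_append dest: member_le_sum_list)

lemma eval_doubled_extend_row:
  assumes "perm_invariant h" "degree_le d h"
    and "\<And>a. M < a \<Longrightarrow> eval_doubled N h (pre @ a # rest) = 0"
  shows "eval_doubled N h (pre @ a # rest) = 0"
proof -
  obtain q where q: "\<And>a. eval_doubled N h (pre @ a # rest) = poly q (of_nat a)"
    using eval_doubled_poly_in_row[OF assms(1,2)] by metis
  have "of_nat ` {M<..} \<subseteq> {x :: rat. poly q x = 0}"
    using assms(3) by (auto simp: q[symmetric])
  moreover have "infinite (of_nat ` {M<..} :: rat set)"
    by (simp add: finite_image_iff inj_on_def infinite_Ioi)
  ultimately have "q = 0"
    using poly_roots_finite finite_subset by blast
  then show ?thesis
    by (simp add: q)
qed

lemma eval_doubled_vanishes: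
  assumes "perm_invariant h" "degree_le d h"
    and large: "\<And>lam. young lam \<Longrightarrow> n0 \<le> sum_list lam \<Longrightarrow> eval_doubled N h lam = 0"
  shows "eval_doubled N h rows = 0"
proof -
  have young_vanish: "eval_doubled N h lam = 0" if "young lam" for lam
  proof (cases lam)
    case Nil
    have "eval_doubled N h [a] = 0" for a
      using eval_doubled_extend_row[OF assms(1,2), where M = n0 and pre = "[]" and rest = "[]"]
        large young_Cons[of "[]"]
      by (simp add: young_def)
    from this[of 0] show ?thesis
      using Nil by (simp add: eval_doubled_def doubled_contents_def)
  next
    case (Cons a rest)
    have "young rest"
      using that Cons by (simp add: young_def sorted_append)
    then show ?thesis
      using eval_doubled_extend_row[OF assms(1,2), where M = "n0 + sum_list rest" and pre = "[]"]
        large young_Cons Cons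
      by simp
  qed
  have "eval_doubled N h (pre @ rest) = 0" if "young rest" for pre rest
    using that
  proof (induction pre arbitrary: rest rule: rev_induct)
    case Nil
    then show ?case using young_vanish by simp
  next
    case (snoc a pre)
    then show ?case
      using eval_doubled_extend_row[OF assms(1,2), where M = "sum_list rest"] young_Cons by simp
  qed
  from this[of "[]" rows] show ?thesis
    by (simp add: young_def)
qed

section \<open>Rows of length two\<close>

definition pair_coeff :: "nat \<Rightarrow> nat \<Rightarrow> nat \<Rightarrow> rat" where
  "pair_coeff j j' m = (if j \<le> m then of_nat (j' choose (m - j)) else 0)"

lemma pair_power_expansion:
  assumes "j \<le> N" "j' \<le> N"
  shows "e ^ j * (e + 1) ^ j' = (\<Sum>m\<le>2 * N. pair_coeff j j' m * e ^ m)"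
proof -
  have "e ^ j * (e + 1) ^ j' = (\<Sum>l\<le>j'. of_nat (j' choose l) * e ^ (j + l))"
    by (simp add: binomial_ring[of e 1] sum_distrib_left power_add mult_ac)
  also have "\<dots> = (\<Sum>m\<in>(\<lambda>l. j + l) ` {..j'}. of_nat (j' choose (m - j)) * e ^ m)"
    by (subst sum.reindex) (auto simp: inj_on_def)
  also have "\<dots> = (\<Sum>m\<le>2 * N. pair_coeff j j' m * e ^ m)"
  proof (rule sum.mono_neutral_cong_left)
    show "(\<lambda>l. j + l) ` {..j'} \<subseteq> {..2 * N}"
      using assms by auto
    show "\<forall>m\<in>{..2 * N} - (\<lambda>l. j + l) ` {..j'}. pair_coeff j j' m * e ^ m = 0"
    proof
      fix m
      assume "m \<in> {..2 * N} - (\<lambda>l. j + l) ` {..j'}"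
      then have "j \<le> m \<Longrightarrow> j' < m - j"
        by (metis DiffD2 atMost_iff image_eqI le_add_diff_inverse not_le)
      then show "pair_coeff j j' m * e ^ m = 0"
        by (auto simp: pair_coeff_def)
    qed
  qed (auto simp: pair_coeff_def)
  finally show ?thesis .
qed

text \<open>The coefficient of \<open>e\<^sup>m\<close> after specialising \<open>x\<^sub>0 := e\<close>, \<open>x\<^sub>1 := e + 1\<close>.\<close>
definition pair_part :: "nat \<Rightarrow> nat \<Rightarrow> symfun \<Rightarrow> symfun" where
  "pair_part N m h =
     (\<lambda>\<beta>. \<Sum>(j, j')\<in>{..N} \<times> {..N}. smult (pair_coeff j j' m) (x0_coeff j' (x0_coeff j h) \<beta>))"

lemma eval_list_pair:
  "eval_list N h t (e # (e + 1) # w) = (\<Sum>m\<le>2 * N. e ^ m * eval_list N (pair_part N m h) t w)"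
proof -
  have "eval_list N h t (e # (e + 1) # w) =
      (\<Sum>(j, j')\<in>{..N} \<times> {..N}. (\<Sum>m\<le>2 * N. pair_coeff j j' m * e ^ m) *
         eval_list N (x0_coeff j' (x0_coeff j h)) t w)"
    unfolding eval_list_Cons_Cons by (rule sum.cong) (auto simp: pair_power_expansion)
  also have "\<dots> = (\<Sum>m\<le>2 * N. e ^ m * eval_list N (pair_part N m h) t w)"
    unfolding pair_part_def split_def
    by (simp add: eval_list_lincomb sum_distrib_left sum_distrib_right mult_ac) (rule sum.swap)
  finally show ?thesis .
qed

lemma perm_invariant_pair_part:
  assumes "perm_invariant h"
  shows "perm_invariant (pair_part N m h)"
proof -
  have "x0_coeff j' (x0_coeff j h) (\<alpha> \<circ> \<sigma>) = x0_coeff j' (x0_coeff j h) \<alpha>" if "bij \<sigma>" for j j' \<sigma> \<alpha>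
    using perm_invariant_x0_coeff[OF perm_invariant_x0_coeff[OF assms]] that
    unfolding perm_invariant_def by blast
  then show ?thesis
    unfolding perm_invariant_def pair_part_def by simp
qed

lemma pair_part_eq_zero: "2 * N < m \<Longrightarrow> pair_part N m h = (\<lambda>_. 0)"
  by (auto simp: pair_part_def pair_coeff_def fun_eq_iff intro!: sum.neutral)

fun pair_iter :: "nat \<Rightarrow> nat list \<Rightarrow> symfun \<Rightarrow> symfun" where
  "pair_iter N [] h = h"
| "pair_iter N (m # ms) h = pair_iter N ms (pair_part N m h)"

lemma coeff_eq_0_of_infinite_roots:
  fixes c :: "nat \<Rightarrow> 'a :: idom"
  assumes "infinite X" "\<And>x. x \<in> X \<Longrightarrow> (\<Sum>m\<le>M. c m * x ^ m) = 0" "m \<le> M"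
  shows "c m = 0"
proof -
  define p where "p = (\<Sum>m\<le>M. monom (c m) m)"
  have "X \<subseteq> {x. poly p x = 0}"
    using assms(2) by (auto simp: p_def poly_sum poly_monom)
  then have "p = 0"
    using assms(1) poly_roots_finite finite_subset by blast
  moreover have "coeff p m = c m"
    using assms(3) by (simp add: p_def coeff_sum)
  ultimately show ?thesis
    by simp
qed

lemma doubled_contents_snoc_pair:
  "doubled_contents (rs @ replicate g 0 @ [1]) =
     doubled_contents rs @ [- of_nat (length rs + g), - of_nat (length rs + g) + 1]"
proof -
  have "row_contents k (replicate g 0) = []" for k
    by (induction g arbitrary: k) auto
  then show ?thesis
    by (simp add: doubled_contents_def row_contents_append numeral_eq_Suc)
qed

lemma eval_list_pair_part_vanishes:
  assumes "perm_invariant h"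
    and "\<And>g. eval_list N h T (doubled_contents (rs @ replicate g 0 @ [1])) = 0"
  shows "eval_list N (pair_part N m h) T (doubled_contents rs) = 0"
proof (cases "m \<le> 2 * N")
  case True
  \<comment> \<open>a row of length two in row \<open>length rs + g + 1\<close> has contents \<open>x, x + 1\<close> with
    \<open>x = - (length rs + g)\<close>, which takes infinitely many values\<close>
  define X where "X = range (\<lambda>g. - (of_nat (length rs + g) :: rat))"
  have "infinite X"
    unfolding X_def by (rule range_inj_infinite) (auto simp: inj_def)
  moreover have "(\<Sum>m\<le>2 * N. eval_list N (pair_part N m h) T (doubled_contents rs) * x ^ m) = 0"
    if "x \<in> X" for x
  proof -
    obtain g where x: "x = - of_nat (length rs + g)"
      using \<open>x \<in> X\<close> X_def by blast
    have "eval_list N h T (x # (x + 1) # doubled_contents rs) =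
        eval_list N h T (doubled_contents (rs @ replicate g 0 @ [1]))"
      unfolding doubled_contents_snoc_pair x[symmetric]
      by (rule eval_list_perm[OF assms(1)]) simp
    then show ?thesis
      using assms(2)[of g] unfolding eval_list_pair by (simp add: mult.commute)
  qed
  ultimately show ?thesis
    using True by (rule coeff_eq_0_of_infinite_roots)
qed (simp add: pair_part_eq_zero)

lemma pair_iter_vanishes:
  assumes "perm_invariant h"
    and "\<And>rs. set rs \<subseteq> {0, 1} \<Longrightarrow> sum_list rs = length ms \<Longrightarrow> eval_list N h T (doubled_contents rs) = 0"
  shows "poly (pair_iter N ms h (\<lambda>_. 0)) T = 0"
  using assms
proof (induction ms arbitrary: h)
  case Nil
  then show ?case
    using Nil.prems(2)[of "[]"] by (simp add: doubled_contents_def)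
next
  case (Cons m ms)
  have "eval_list N (pair_part N m h) T (doubled_contents rs) = 0"
    if "set rs \<subseteq> {0, 1}" "sum_list rs = length ms" for rs
    using that by (intro eval_list_pair_part_vanishes[OF Cons.prems(1)] Cons.prems(2)) auto
  then show ?case
    using Cons.IH[OF perm_invariant_pair_part[OF Cons.prems(1)]] by simp
qed

definition pair_weight :: "nat list \<Rightarrow> (nat \<Rightarrow> nat) \<Rightarrow> rat" where
  "pair_weight ms \<alpha> = (\<Prod>i<length ms. pair_coeff (\<alpha> (2 * i)) (\<alpha> (2 * i + 1)) (ms ! i))"

lemma pair_weight_mon_cons:
  "pair_weight (m # ms) (mon_cons j (mon_cons j' \<alpha>)) = pair_coeff j j' m * pair_weight ms \<alpha>"
  unfolding pair_weight_def by (simp only: length_Cons prod.lessThan_Suc_shift) simp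

lemma smult_sum_right: "smult c (\<Sum>i\<in>I. f i) = (\<Sum>i\<in>I. smult c (f i))"
  by (induction I rule: infinite_finite_induct) (simp_all add: smult_add_right)

lemma pair_iter_at_zero:
  "pair_iter N ms h (\<lambda>_. 0) = (\<Sum>\<alpha>\<in>exps_box N (2 * length ms). smult (pair_weight ms \<alpha>) (h \<alpha>))"
proof (induction ms arbitrary: h)
  case Nil
  then show ?case by (simp add: exps_box_0 pair_weight_def)
next
  case (Cons m ms)
  let ?B = "exps_box N (2 * length ms)"
  have "pair_iter N (m # ms) h (\<lambda>_. 0) = (\<Sum>\<alpha>\<in>?B. smult (pair_weight ms \<alpha>) (pair_part N m h \<alpha>))"
    by (simp only: pair_iter.simps Cons.IH)
  also have "\<dots> = (\<Sum>\<alpha>\<in>?B. \<Sum>j\<le>N. \<Sum>j'\<le>N.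
      smult (pair_coeff j j' m * pair_weight ms \<alpha>) (h (mon_cons j (mon_cons j' \<alpha>))))"
    by (simp add: pair_part_def x0_coeff_def smult_sum_right sum.cartesian_product[symmetric]
        mult.commute)
  also have "\<dots> = (\<Sum>j\<le>N. \<Sum>j'\<le>N. \<Sum>\<alpha>\<in>?B.
      smult (pair_weight (m # ms) (mon_cons j (mon_cons j' \<alpha>))) (h (mon_cons j (mon_cons j' \<alpha>))))"
    unfolding pair_weight_mon_cons by (simp only: sum.swap[of _ ?B])
  also have "\<dots> = (\<Sum>\<alpha>\<in>exps_box N (2 * length (m # ms)). smult (pair_weight (m # ms) \<alpha>) (h \<alpha>))"
    by (simp add: sum_exps_box_Suc)
  finally show ?case .
qed

section \<open>A leading monomial\<close>

definition mon_sqsum :: "(nat \<Rightarrow> nat) \<Rightarrow> nat" where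
  "mon_sqsum \<alpha> = (\<Sum>i\<in>mon_support \<alpha>. \<alpha> i ^ 2)"

definition leading_mon :: "symfun \<Rightarrow> (nat \<Rightarrow> nat) \<Rightarrow> bool" where
  "leading_mon h \<alpha> \<longleftrightarrow> h \<alpha> \<noteq> 0 \<and>
     (\<forall>\<beta>. h \<beta> \<noteq> 0 \<longrightarrow> mon_degree \<beta> \<le> mon_degree \<alpha> \<and>
        (mon_degree \<beta> = mon_degree \<alpha> \<longrightarrow> mon_sqsum \<alpha> \<le> mon_sqsum \<beta>))"

lemma ex_leading_mon:
  assumes "degree_le d h" "h \<alpha>0 \<noteq> 0"
  obtains \<alpha> where "leading_mon h \<alpha>"
proof -
  have "\<forall>\<beta>. h \<beta> \<noteq> 0 \<longrightarrow> mon_degree \<beta> < Suc d"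
    using assms(1) unfolding degree_le_def using le_imp_less_Suc by blast
  then obtain \<delta> where \<delta>: "h \<delta> \<noteq> 0" "\<And>\<beta>. h \<beta> \<noteq> 0 \<Longrightarrow> mon_degree \<beta> \<le> mon_degree \<delta>"
    using Lattices_Big.ex_has_greatest_nat[where P = "\<lambda>\<beta>. h \<beta> \<noteq> 0", OF assms(2)] by blast
  obtain \<alpha> where "h \<alpha> \<noteq> 0 \<and> mon_degree \<alpha> = mon_degree \<delta>"
    "\<And>\<beta>. h \<beta> \<noteq> 0 \<and> mon_degree \<beta> = mon_degree \<delta> \<Longrightarrow> mon_sqsum \<alpha> \<le> mon_sqsum \<beta>"
    using ex_has_least_nat[of "\<lambda>\<beta>. h \<beta> \<noteq> 0 \<and> mon_degree \<beta> = mon_degree \<delta>" \<delta> mon_sqsum] \<delta>(1) by blast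
  then have "leading_mon h \<alpha>"
    using \<delta>(2) by (auto simp: leading_mon_def)
  then show ?thesis ..
qed

lemma mon_support_comp: "mon_support (\<alpha> \<circ> \<sigma>) = \<sigma> -` mon_support \<alpha>"
  by (simp add: mon_support_def vimage_def)

lemma sum_mon_support_comp_bij:
  assumes "bij \<sigma>"
  shows "(\<Sum>i\<in>mon_support (\<alpha> \<circ> \<sigma>). F ((\<alpha> \<circ> \<sigma>) i)) = (\<Sum>i\<in>mon_support \<alpha>. F (\<alpha> i))"
proof -
  have "bij_betw \<sigma> (\<sigma> -` mon_support \<alpha>) (mon_support \<alpha>)"
    using assms bij_betw_subset[of \<sigma> UNIV UNIV "\<sigma> -` mon_support \<alpha>"]
    by (simp add: bij_is_surj surj_image_vimage_eq)
  from sum.reindex_bij_betw[OF this, of "\<lambda>i. F (\<alpha> i)"] show ?thesis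
    by (simp add: mon_support_comp)
qed

lemma ex_bij_image:
  fixes A B :: "'a set"
  assumes "finite B" "finite A" "card A = card B"
  shows "\<exists>\<sigma>. bij \<sigma> \<and> \<sigma> ` B = A"
  using assms
proof (induction B arbitrary: A rule: finite_induct)
  case empty
  then show ?case by auto
next
  case (insert b B)
  then have "A \<noteq> {}"
    by auto
  then obtain a where a: "a \<in> A"
    by blast
  then have "card (A - {a}) = card B"
    using insert by simp
  then obtain \<sigma> where \<sigma>: "bij \<sigma>" "\<sigma> ` B = A - {a}"
    using insert by (meson finite_Diff)
  define \<tau> where "\<tau> = Transposition.transpose (\<sigma> b) a"
  have "\<sigma> b \<notin> A - {a}"
    using \<sigma> insert(2) by (metis bij_is_inj inj_image_mem_iff)
  then have "\<tau> z = z" if "z \<in> A - {a}" for z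
    using that unfolding \<tau>_def by (intro transpose_apply_other) auto
  then have "\<tau> ` (A - {a}) = A - {a}"
    by force
  moreover have "\<tau> (\<sigma> b) = a"
    by (simp add: \<tau>_def)
  ultimately have "(\<tau> \<circ> \<sigma>) ` insert b B = insert a (A - {a})"
    by (simp only: image_insert comp_apply image_comp[symmetric] \<sigma>(2))
  also have "\<dots> = A"
    using a by blast
  finally have "(\<tau> \<circ> \<sigma>) ` insert b B = A" .
  moreover have "bij (\<tau> \<circ> \<sigma>)"
    using \<sigma>(1) by (simp add: \<tau>_def bij_comp)
  ultimately show ?case by blast
qed

lemma ex_leading_mon_even:
  assumes "perm_invariant h" "degree_le d h" "h \<alpha>0 \<noteq> 0"
  obtains \<alpha> s where "leading_mon h \<alpha>" "mon_support \<alpha> = (\<lambda>i. 2 * i) ` {..<s}"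
proof -
  obtain \<alpha> where \<alpha>: "leading_mon h \<alpha>"
    using ex_leading_mon[OF assms(2,3)] .
  have "finite (mon_support \<alpha>)"
    using \<alpha> assms(2) by (simp add: leading_mon_def degree_le_def)
  moreover have "card ((\<lambda>i. 2 * i) ` {..<card (mon_support \<alpha>)}) = card (mon_support \<alpha>)"
    by (simp add: card_image inj_on_def)
  ultimately obtain \<sigma>
    where \<sigma>: "bij \<sigma>" "\<sigma> ` ((\<lambda>i. 2 * i) ` {..<card (mon_support \<alpha>)}) = mon_support \<alpha>"
    using ex_bij_image[of "(\<lambda>i. 2 * i) ` {..<card (mon_support \<alpha>)}" "mon_support \<alpha>"] by auto
  have "mon_support (\<alpha> \<circ> \<sigma>) = \<sigma> -` mon_support \<alpha>"
    by (rule mon_support_comp)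
  also have "\<dots> = (\<lambda>i. 2 * i) ` {..<card (mon_support \<alpha>)}"
    using \<sigma> by (metis bij_is_inj inj_vimage_image_eq)
  finally have support: "mon_support (\<alpha> \<circ> \<sigma>) = (\<lambda>i. 2 * i) ` {..<card (mon_support \<alpha>)}" .
  have "mon_degree (\<alpha> \<circ> \<sigma>) = mon_degree \<alpha>" "mon_sqsum (\<alpha> \<circ> \<sigma>) = mon_sqsum \<alpha>"
    unfolding mon_degree_def mon_sqsum_def
    using sum_mon_support_comp_bij[OF \<sigma>(1), where \<alpha> = \<alpha> and F = "\<lambda>x. x"]
      sum_mon_support_comp_bij[OF \<sigma>(1), where \<alpha> = \<alpha> and F = "\<lambda>x. x ^ 2"]
    by simp_all
  moreover have "h (\<alpha> \<circ> \<sigma>) = h \<alpha>"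
    using assms(1) \<sigma>(1) by (simp add: perm_invariant_def)
  ultimately have "leading_mon h (\<alpha> \<circ> \<sigma>)"
    using \<alpha> by (simp add: leading_mon_def)
  with support show ?thesis
    using that by blast
qed

lemma sum_pairs:
  fixes f :: "nat \<Rightarrow> 'a :: comm_monoid_add"
  shows "(\<Sum>p<2 * K. f p) = (\<Sum>i<K. f (2 * i) + f (2 * i + 1))"
  by (induction K) (simp_all add: add_ac)

lemma sum_mon_support_pairs:
  assumes "mon_support \<alpha> \<subseteq> {..<2 * K}" "F 0 = 0"
  shows "(\<Sum>i\<in>mon_support \<alpha>. F (\<alpha> i)) = (\<Sum>i<K. F (\<alpha> (2 * i)) + F (\<alpha> (2 * i + 1)))"
proof -
  have "(\<Sum>i\<in>mon_support \<alpha>. F (\<alpha> i)) = (\<Sum>p<2 * K. F (\<alpha> p))"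
    using assms by (intro sum.mono_neutral_left) (auto simp: mon_support_def)
  then show ?thesis
    by (simp add: sum_pairs)
qed

lemma pair_coeff_ne_0_iff: "pair_coeff j j' m \<noteq> 0 \<longleftrightarrow> j \<le> m \<and> m \<le> j + j'"
  by (auto simp: pair_coeff_def binomial_eq_0_iff)

lemma ex_pair_swap:
  fixes \<alpha> \<gamma> :: "nat \<Rightarrow> nat"
  assumes "\<And>i. \<gamma> (2 * i + 1) = 0" "\<And>i. \<alpha> (2 * i) * \<alpha> (2 * i + 1) = 0"
    and "\<And>i. \<alpha> (2 * i) + \<alpha> (2 * i + 1) = \<gamma> (2 * i)"
  shows "\<exists>\<tau>. bij \<tau> \<and> \<alpha> = \<gamma> \<circ> \<tau>"
proof -
  define \<tau> where
    "\<tau> p = (if \<alpha> (2 * (p div 2)) = 0 then (if even p then p + 1 else p - 1) else p)" for p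
  have pair_cases: "\<exists>i. p = 2 * i \<or> p = 2 * i + 1" for p :: nat
    by presburger
  have "\<tau> \<circ> \<tau> = id"
  proof
    fix p :: nat
    obtain i where "p = 2 * i \<or> p = 2 * i + 1"
      using pair_cases by blast
    then show "(\<tau> \<circ> \<tau>) p = id p"
      by (auto simp: \<tau>_def)
  qed
  then have "bij \<tau>"
    using o_bij by blast
  moreover have "\<alpha> = \<gamma> \<circ> \<tau>"
  proof
    fix p :: nat
    obtain i where "p = 2 * i \<or> p = 2 * i + 1"
      using pair_cases by blast
    then show "\<alpha> p = (\<gamma> \<circ> \<tau>) p"
      using assms[of i] by (auto simp: \<tau>_def)
  qed
  ultimately show ?thesis
    by blast
qed

lemma even_support_zero:
  assumes "mon_support \<alpha> = (\<lambda>i. 2 * i) ` {..<s}"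
  shows "\<alpha> (Suc (2 * i)) = 0" "2 * s \<le> i \<Longrightarrow> \<alpha> i = 0"
proof -
  have zero: "\<alpha> i = 0" if "i \<notin> (\<lambda>i. 2 * i) ` {..<s}" for i
    using that unfolding assms[symmetric] by (simp add: mon_support_def)
  show "\<alpha> (Suc (2 * i)) = 0"
    by (rule zero) (auto, presburger)
  show "2 * s \<le> i \<Longrightarrow> \<alpha> i = 0"
    by (rule zero) auto
qed

lemma leading_mon_pair_split:
  assumes lead: "leading_mon h \<alpha>1" and support1: "mon_support \<alpha>1 = (\<lambda>i. 2 * i) ` {..<s}" "s \<le> K"
    and support: "mon_support \<alpha> \<subseteq> {..<2 * K}" and "h \<alpha> \<noteq> 0"
    and le: "\<And>i. i < K \<Longrightarrow> \<alpha>1 (2 * i) \<le> \<alpha> (2 * i) + \<alpha> (2 * i + 1)"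
  shows "\<forall>i<K. \<alpha> (2 * i) + \<alpha> (2 * i + 1) = \<alpha>1 (2 * i) \<and> \<alpha> (2 * i) * \<alpha> (2 * i + 1) = 0"
proof -
  let ?a = "\<lambda>i. \<alpha> (2 * i)" and ?b = "\<lambda>i. \<alpha> (2 * i + 1)" and ?m = "\<lambda>i. \<alpha>1 (2 * i)"
  have support1': "mon_support \<alpha>1 \<subseteq> {..<2 * K}"
    unfolding support1(1) using support1(2) by auto
  note odd1 = even_support_zero(1)[OF support1(1)]
  have degrees: "mon_degree \<alpha> = (\<Sum>i<K. ?a i + ?b i)" "mon_degree \<alpha>1 = (\<Sum>i<K. ?m i)"
    using sum_mon_support_pairs[OF support, of "\<lambda>x. x"] sum_mon_support_pairs[OF support1', of "\<lambda>x. x"]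
    by (simp_all add: mon_degree_def odd1)
  \<comment> \<open>maximality of the degree forces every pair to carry exactly the exponent of \<open>\<alpha>1\<close> \<dots>\<close>
  have "mon_degree \<alpha> \<le> mon_degree \<alpha>1"
    using lead \<open>h \<alpha> \<noteq> 0\<close> by (simp add: leading_mon_def)
  then have degree_sums: "(\<Sum>i<K. ?m i) = (\<Sum>i<K. ?a i + ?b i)"
    unfolding degrees using le by (intro antisym[OF sum_mono]) simp_all
  have sum_eq: "?a i + ?b i = ?m i" if "i < K" for i
    by (rule sum_mono_inv[OF degree_sums, symmetric]) (use le that in simp_all)
  have "(\<Sum>i<K. ?m i ^ 2) = (\<Sum>i<K. (?a i + ?b i) ^ 2)"
    using sum_eq by (intro sum.cong) simp_all
  then have sqsums:
      "mon_sqsum \<alpha> = (\<Sum>i<K. ?a i ^ 2 + ?b i ^ 2)" "mon_sqsum \<alpha>1 = (\<Sum>i<K. (?a i + ?b i) ^ 2)"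
    using sum_mon_support_pairs[OF support, of "\<lambda>x. x ^ 2"]
      sum_mon_support_pairs[OF support1', of "\<lambda>x. x ^ 2"]
    by (simp_all add: mon_sqsum_def odd1)
  \<comment> \<open>\<dots> and minimality of the sum of squares forbids splitting it between the two members of a pair\<close>
  have "mon_degree \<alpha> = mon_degree \<alpha>1"
    using degrees degree_sums by simp
  then have "mon_sqsum \<alpha>1 \<le> mon_sqsum \<alpha>"
    using lead \<open>h \<alpha> \<noteq> 0\<close> by (simp add: leading_mon_def)
  then have sq_sums: "(\<Sum>i<K. ?a i ^ 2 + ?b i ^ 2) = (\<Sum>i<K. (?a i + ?b i) ^ 2)"
    unfolding sqsums by (intro antisym[OF sum_mono]) (simp_all add: power2_sum)
  have "?a i * ?b i = 0" if "i < K" for i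
  proof -
    have "?a i ^ 2 + ?b i ^ 2 = (?a i + ?b i) ^ 2"
      by (rule sum_mono_inv[OF sq_sums]) (use that in \<open>simp_all add: power2_sum\<close>)
    then show ?thesis
      by (simp add: power2_sum)
  qed
  with sum_eq show ?thesis
    by blast
qed

lemma pair_weight_at_leading_mon:
  assumes "perm_invariant h" and lead: "leading_mon h \<alpha>1"
    and support1: "mon_support \<alpha>1 = (\<lambda>i. 2 * i) ` {..<s}" "s \<le> K"
    and support: "mon_support \<alpha> \<subseteq> {..<2 * K}" and "h \<alpha> \<noteq> 0"
    and weight: "pair_weight (map (\<lambda>i. \<alpha>1 (2 * i)) [0..<K]) \<alpha> \<noteq> 0"
  shows "pair_weight (map (\<lambda>i. \<alpha>1 (2 * i)) [0..<K]) \<alpha> = 1" "h \<alpha> = h \<alpha>1"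
proof -
  have "\<alpha>1 (2 * i) \<le> \<alpha> (2 * i) + \<alpha> (2 * i + 1)" if "i < K" for i
    using weight that by (auto simp: pair_weight_def pair_coeff_ne_0_iff)
  then have pairs: "\<forall>i<K. \<alpha> (2 * i) + \<alpha> (2 * i + 1) = \<alpha>1 (2 * i) \<and> \<alpha> (2 * i) * \<alpha> (2 * i + 1) = 0"
    by (rule leading_mon_pair_split[OF lead support1 support \<open>h \<alpha> \<noteq> 0\<close>])
  then show "pair_weight (map (\<lambda>i. \<alpha>1 (2 * i)) [0..<K]) \<alpha> = 1"
    unfolding pair_weight_def by (intro prod.neutral) (auto simp: pair_coeff_def)
  have beyond: "\<alpha> p = 0" "\<alpha>1 p = 0" if "2 * K \<le> p" for p
    using that support even_support_zero(2)[OF support1(1), of p] support1(2)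
    by (auto simp: mon_support_def subset_iff)
  obtain \<tau> where "bij \<tau>" "\<alpha> = \<alpha>1 \<circ> \<tau>"
  proof -
    have "\<exists>\<tau>. bij \<tau> \<and> \<alpha> = \<alpha>1 \<circ> \<tau>"
    proof (rule ex_pair_swap)
      fix i
      show "\<alpha>1 (2 * i + 1) = 0"
        using even_support_zero(1)[OF support1(1)] by simp
      show "\<alpha> (2 * i) * \<alpha> (2 * i + 1) = 0" "\<alpha> (2 * i) + \<alpha> (2 * i + 1) = \<alpha>1 (2 * i)"
        using pairs beyond[of "2 * i"] beyond[of "2 * i + 1"] by (cases "i < K"; simp)+
    qed
    then show ?thesis
      using that by blast
  qed
  then show "h \<alpha> = h \<alpha>1"
    using assms(1) by (simp add: perm_invariant_def)
qed

lemma poly_pair_iter_at_leading_mon: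
  assumes "perm_invariant h" "degree_le N h" "leading_mon h \<alpha>1"
    and support1: "mon_support \<alpha>1 = (\<lambda>i. 2 * i) ` {..<s}" "s \<le> K"
  shows "\<exists>c > 0. poly (pair_iter N (map (\<lambda>i. \<alpha>1 (2 * i)) [0..<K]) h (\<lambda>_. 0)) T =
      of_nat c * poly (h \<alpha>1) T"
proof -
  let ?ms = "map (\<lambda>i. \<alpha>1 (2 * i)) [0..<K]"
  let ?B = "exps_box N (2 * K)"
  define G where "G = {\<alpha> \<in> ?B. pair_weight ?ms \<alpha> \<noteq> 0 \<and> h \<alpha> \<noteq> 0}"
  have "pair_weight ?ms \<alpha> * poly (h \<alpha>) T =
      (if pair_weight ?ms \<alpha> \<noteq> 0 \<and> h \<alpha> \<noteq> 0 then poly (h \<alpha>1) T else 0)"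
    if "\<alpha> \<in> ?B" for \<alpha>
  proof -
    have "mon_support \<alpha> \<subseteq> {..<2 * K}"
      using that by (auto simp: exps_box_def mon_support_def not_less[symmetric])
    then show ?thesis
      using pair_weight_at_leading_mon[OF assms(1,3) support1] by (cases "h \<alpha> = 0") auto
  qed
  then have "poly (pair_iter N ?ms h (\<lambda>_. 0)) T =
      (\<Sum>\<alpha>\<in>?B. if pair_weight ?ms \<alpha> \<noteq> 0 \<and> h \<alpha> \<noteq> 0 then poly (h \<alpha>1) T else 0)"
    by (simp add: pair_iter_at_zero poly_sum)
  also have "\<dots> = (\<Sum>\<alpha>\<in>G. poly (h \<alpha>1) T)"
    unfolding G_def by (rule sum.inter_filter[OF finite_exps_box, symmetric])
  finally have pair_iter_eq: "poly (pair_iter N ?ms h (\<lambda>_. 0)) T = of_nat (card G) * poly (h \<alpha>1) T"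
    by simp
  have "\<alpha>1 \<in> ?B"
    using even_support_zero(2)[OF support1(1)] support1(2) degree_le_exponent_le[OF assms(2)] assms(3)
    by (auto simp: exps_box_def leading_mon_def)
  moreover have "pair_weight ?ms \<alpha>1 = 1"
    unfolding pair_weight_def using even_support_zero(1)[OF support1(1)]
    by (intro prod.neutral) (simp add: pair_coeff_def)
  ultimately have "\<alpha>1 \<in> G"
    using assms(3) by (simp add: G_def leading_mon_def)
  moreover have "finite G"
    using finite_exps_box by (simp add: G_def)
  ultimately have "card G > 0"
    by (simp add: card_gt_0_iff) blast
  with pair_iter_eq show ?thesis
    by blast
qed

lemma ex_pair_iter_nonzero:
  assumes "perm_invariant h" "degree_le N h" "h \<alpha>0 \<noteq> 0"
  obtains ms where "poly (pair_iter N ms h (\<lambda>_. 0)) (of_nat (2 * length ms)) \<noteq> 0"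
proof -
  obtain \<alpha>1 s where lead: "leading_mon h \<alpha>1" and support1: "mon_support \<alpha>1 = (\<lambda>i. 2 * i) ` {..<s}"
    using ex_leading_mon_even[OF assms] .
  then have "h \<alpha>1 \<noteq> 0"
    by (simp add: leading_mon_def)
  have "\<not> (\<lambda>K. of_nat (2 * K) :: rat) ` {s..} \<subseteq> {x. poly (h \<alpha>1) x = 0}"
  proof
    assume "(\<lambda>K. of_nat (2 * K) :: rat) ` {s..} \<subseteq> {x. poly (h \<alpha>1) x = 0}"
    moreover have "infinite ((\<lambda>K. of_nat (2 * K) :: rat) ` {s..})"
      by (simp add: finite_image_iff inj_on_def infinite_Ici)
    ultimately show False
      using poly_roots_finite[OF \<open>h \<alpha>1 \<noteq> 0\<close>] finite_subset by blast
  qed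
  then obtain K where "s \<le> K" "poly (h \<alpha>1) (of_nat (2 * K)) \<noteq> 0"
    by auto
  moreover obtain c where "c > 0"
    "poly (pair_iter N (map (\<lambda>i. \<alpha>1 (2 * i)) [0..<K]) h (\<lambda>_. 0)) (of_nat (2 * K)) =
      of_nat c * poly (h \<alpha>1) (of_nat (2 * K))"
    using poly_pair_iter_at_leading_mon[OF assms(1,2) lead support1 \<open>s \<le> K\<close>] by blast
  ultimately show ?thesis
    using that[of "map (\<lambda>i. \<alpha>1 (2 * i)) [0..<K]"] by simp
qed

lemma eq_0_if_eval_doubled_vanishes:
  assumes "perm_invariant h" "degree_le N h"
    and "\<And>lam. young lam \<Longrightarrow> n0 \<le> sum_list lam \<Longrightarrow> eval_doubled N h lam = 0"
  shows "h = (\<lambda>_. 0)"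
proof (rule ccontr)
  assume "h \<noteq> (\<lambda>_. 0)"
  then obtain \<alpha>0 where "h \<alpha>0 \<noteq> 0"
    by auto
  then obtain ms where "poly (pair_iter N ms h (\<lambda>_. 0)) (of_nat (2 * length ms)) \<noteq> 0"
    using ex_pair_iter_nonzero[OF assms(1,2)] by metis
  moreover have "eval_doubled N h rows = 0" for rows
    by (rule eval_doubled_vanishes[OF assms])
  then have "poly (pair_iter N ms h (\<lambda>_. 0)) (of_nat (2 * length ms)) = 0"
    by (intro pair_iter_vanishes[OF assms(1)]) (metis eval_doubled_def)
  ultimately show False
    by contradiction
qed

theorem corollary4p3:
  fixes f g :: symfun
  assumes "is_symfun f" and "is_symfun g"
    and "\<exists>n0. \<forall>lam. young lam \<and> size_yd lam \<ge> n0 \<longrightarrow>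
           eval_contents f (double_yd lam) = eval_contents g (double_yd lam)"
  shows "f = g"
proof -
  obtain df dg
    where f: "perm_invariant f" "degree_le df f" and g: "perm_invariant g" "degree_le dg g"
    using assms(1,2) is_symfun_iff by metis
  define N where "N = max df dg"
  have f': "degree_le N f" and g': "degree_le N g"
    using f(2) g(2) degree_le_mono N_def by auto
  obtain n0 where "\<And>lam. young lam \<Longrightarrow> n0 \<le> size_yd lam \<Longrightarrow>
      eval_contents f (double_yd lam) = eval_contents g (double_yd lam)"
    using assms(3) by blast
  then have "eval_doubled N (\<lambda>\<alpha>. f \<alpha> - g \<alpha>) lam = 0" if "young lam" "n0 \<le> sum_list lam" for lam
    using that eval_contents_double_yd[OF f(1) f'] eval_contents_double_yd[OF g(1) g']
    by (simp add: eval_doubled_diff size_yd_def)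
  then have "(\<lambda>\<alpha>. f \<alpha> - g \<alpha>) = (\<lambda>_. 0)"
    using perm_invariant_diff[OF f(1) g(1)] degree_le_diff[OF f' g'] eq_0_if_eval_doubled_vanishes
    by blast
  then show ?thesis
    by (simp add: fun_eq_iff)
qed

end
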